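(* Let $f$ be a deterministic decision tree of depth $d$ over $m$ variables $x_1,\dots,x_m$, viewed as a Boolean function $f:\{-1,1\}^m\to\{-1,1\}$. Then for every $\ell\in\{0,1,\dots,d\}$, $$L_{1,\ell}(f)=\sum_{S\subseteq[m]:|S|=\ell}|\hat f(S)|\ \le\ \sqrt{O(d)^{\ell}\cdot O(\log m)^{\ell-1}},$$ where the $O(\cdot)$ hide universal constants.
   Context: Every $f:\{-1,1\}^m\to\mathbb R$ has a unique Fourier expansion $f(x)=\sum_{S\subseteq[m]}\hat f(S)\prod_{i\in S}x_i$ with $\hat f(S)=\mathbb E_{x\sim\{-1,1\}^m}[f(x)\prod_{i\in S}x_i]$ ($x$ uniform). *)

theory Defs
  imports Complex_Main "HOL-Library.FuncSet"
begin

text \<open>Deterministic decision trees: a leaf outputs +1 (True) or -1 (False);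
  an inner node queries variable i (0-based) and goes to the left subtree if x_i = -1
  and to the right subtree if x_i = 1.\<close>
datatype dtree = Leaf bool | Node nat dtree dtree

fun dt_depth :: "dtree \<Rightarrow> nat" where
  "dt_depth (Leaf b) = 0"
| "dt_depth (Node i l r) = Suc (max (dt_depth l) (dt_depth r))"

fun dt_vars_below :: "nat \<Rightarrow> dtree \<Rightarrow> bool" where
  "dt_vars_below m (Leaf b) = True"
| "dt_vars_below m (Node i l r) = (i < m \<and> dt_vars_below m l \<and> dt_vars_below m r)"

fun dt_eval :: "dtree \<Rightarrow> (nat \<Rightarrow> real) \<Rightarrow> real" where
  "dt_eval (Leaf b) x = (if b then 1 else -1)"
| "dt_eval (Node i l r) x = (if x i = 1 then dt_eval r x else dt_eval l x)"

text \<open>The Boolean cube {-1,1}^m, points as functions on {0..<m} (undefined elsewhere).\<close>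
definition cube :: "nat \<Rightarrow> (nat \<Rightarrow> real) set" where
  "cube m = PiE {0..<m} (\<lambda>_. {-1, 1})"

definition fourier_coeff :: "nat \<Rightarrow> ((nat \<Rightarrow> real) \<Rightarrow> real) \<Rightarrow> nat set \<Rightarrow> real" where
  "fourier_coeff m f S = (\<Sum>x\<in>cube m. f x * (\<Prod>i\<in>S. x i)) / 2 ^ m"

definition L1_level :: "nat \<Rightarrow> ((nat \<Rightarrow> real) \<Rightarrow> real) \<Rightarrow> nat \<Rightarrow> real" where
  "L1_level m f l = (\<Sum>S\<in>{S. S \<subseteq> {0..<m} \<and> card S = l}. \<bar>fourier_coeff m f S\<bar>)"

end

(* L_{1,l}(f) = E[f g] for the degree-l multilinear polynomial g = sum_{|S| = l} sgn(fhat S) x^S,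
   whose coefficients are bounded by 1.  Run the tree on a uniform input, keeping the
   unqueried variables free: E[f g] becomes the expectation over the leaf reached of
   f(leaf) g(z), with z the partial assignment at the leaf (free coordinates set to 0), so
   L_{1,l}(f)^2 <= E[g(z)^2].  Along the walk g(z) is a martingale, a query of a free x_i moving
   it by +-D_i g(z).  A two-point inequality and Minkowski's inequality in L^r bound its 2r-th
   moment after n steps by (1 + n(2r - 1))^r times a bound on the 2r-th moments of the
   increments, and the m possible queries cost a factor m <= 3^r.  Induction on the degree
   (the D_i g have degree l - 1) and the choice r ~ ln m give
   E[g(z)^2] <= O(d)^l O(log m)^(l-1). *)

theory Submission
  imports Defs
begin

lemma power_convex_combination_le:
  fixes u v t :: real
  assumes "0 \<le> u" "0 \<le> v" "0 \<le> t" "t \<le> 1"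
  shows "((1 - t) * u + t * v) ^ k \<le> (1 - t) * u ^ k + t * v ^ k"
proof (induction k)
  case 0
  show ?case by simp
next
  case (Suc k)
  have "0 \<le> (u - v) * (u ^ k - v ^ k)"
  proof (cases "u \<le> v")
    case True
    then have "u ^ k \<le> v ^ k"
      using assms(1) by (rule power_mono)
    with True show ?thesis
      by (simp add: mult_nonpos_nonpos)
  next
    case False
    then have "v ^ k \<le> u ^ k"
      using assms(2) by (simp add: power_mono)
    with False show ?thesis
      by simp
  qed
  then have "0 \<le> t * (1 - t) * ((u - v) * (u ^ k - v ^ k))"
    using assms(3,4) by simp
  moreover have "((1 - t) * u + t * v) ^ Suc k \<le> ((1 - t) * u + t * v) * ((1 - t) * u ^ k + t * v ^ k)"
    using Suc assms by (simp add: mult_left_mono)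
  ultimately show ?case
    by (simp add: algebra_simps)
qed

lemma midpoint_power_le:
  fixes a b :: real
  assumes "0 \<le> a" "0 \<le> b"
  shows "((a + b) / 2) ^ k \<le> (a ^ k + b ^ k) / 2"
  using power_convex_combination_le[OF assms, of "1 / 2" k] by (simp add: add_divide_distrib)

text \<open>Convexity of \<open>x ^ Suc k\<close> at the weights \<open>\<alpha> / (\<alpha> + \<gamma>)\<close> and \<open>\<gamma> / (\<alpha> + \<gamma>)\<close>;
  taking expectations gives Minkowski's inequality.\<close>

lemma power_add_le_weighted:
  fixes A B \<alpha> \<gamma> :: real
  assumes "0 \<le> A" "0 \<le> B" "0 < \<alpha>" "0 < \<gamma>"
  shows "(A + B) ^ Suc k \<le> (\<alpha> + \<gamma>) ^ k / \<alpha> ^ k * A ^ Suc k + (\<alpha> + \<gamma>) ^ k / \<gamma> ^ k * B ^ Suc k"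
proof -
  define t where "t = \<gamma> / (\<alpha> + \<gamma>)"
  define x where "x = A * (\<alpha> + \<gamma>) / \<alpha>"
  define y where "y = B * (\<alpha> + \<gamma>) / \<gamma>"
  have t: "0 \<le> t" "t \<le> 1" "1 - t = \<alpha> / (\<alpha> + \<gamma>)"
    using assms by (auto simp: t_def field_simps)
  have "(1 - t) * x = A"
    using assms unfolding t(3) x_def by simp
  moreover have "t * y = B"
    using assms unfolding t_def y_def by simp
  ultimately have "A + B = (1 - t) * x + t * y"
    by simp
  also have "(\<dots>) ^ Suc k \<le> (1 - t) * x ^ Suc k + t * y ^ Suc k"
    using assms t(1,2) by (intro power_convex_combination_le) (simp_all add: x_def y_def)
  also have "x ^ Suc k = A ^ Suc k * ((\<alpha> + \<gamma>) * (\<alpha> + \<gamma>) ^ k) / (\<alpha> * \<alpha> ^ k)"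
    unfolding x_def power_divide power_mult_distrib by simp
  then have "(1 - t) * x ^ Suc k = (\<alpha> + \<gamma>) ^ k / \<alpha> ^ k * A ^ Suc k"
    using assms by (simp add: t(3) field_simps)
  also have "y ^ Suc k = B ^ Suc k * ((\<alpha> + \<gamma>) * (\<alpha> + \<gamma>) ^ k) / (\<gamma> * \<gamma> ^ k)"
    unfolding y_def power_divide power_mult_distrib by simp
  then have "t * y ^ Suc k = (\<alpha> + \<gamma>) ^ k / \<gamma> ^ k * B ^ Suc k"
    using assms by (simp add: t_def field_simps)
  finally show ?thesis .
qed

lemma binomial_Suc_real:
  assumes "k \<le> n"
  shows "real (n choose Suc k) = real (n choose k) * (real n - real k) / (real k + 1)"
proof -
  have "Suc k * (n choose Suc k) = (n - k) * (n choose k)"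
    by (simp only: binomial_absorption binomial_absorb_comp)
  then have "(real k + 1) * real (n choose Suc k) = (real n - real k) * real (n choose k)"
    using assms by (metis of_nat_Suc of_nat_diff of_nat_mult add.commute)
  then show ?thesis by (simp add: field_simps)
qed

lemma binomial_double_le:
  "j \<le> r \<Longrightarrow> real (2 * r choose (2 * j)) \<le> real (r choose j) * (2 * real r - 1) ^ j"
proof (induction j)
  case 0
  show ?case by simp
next
  case (Suc j)
  then have j: "j < r" by simp
  define \<rho> where "\<rho> = (real r - real j) / (real j + 1) * ((2 * real r - 2 * real j - 1) / (2 * real j + 1))"
  define \<sigma> where "\<sigma> = (real r - real j) / (real j + 1) * (2 * real r - 1)"
  have "real (2 * r choose (2 * Suc j))
      = real (2 * r choose (2 * j)) * ((2 * real r - 2 * real j) / (2 * real j + 1) * ((2 * real r - 2 * real j - 1) / (2 * real j + 2)))"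
    using binomial_Suc_real[of "2 * j" "2 * r"] binomial_Suc_real[of "Suc (2 * j)" "2 * r"] j
    by (simp add: algebra_simps)
  also have "\<dots> = real (2 * r choose (2 * j)) * \<rho>"
    unfolding \<rho>_def by (simp add: divide_simps) (simp add: algebra_simps)
  also have "\<dots> \<le> real (r choose j) * (2 * real r - 1) ^ j * \<sigma>"
  proof (rule mult_mono)
    have "2 * real r - 2 * real j - 1 \<le> (2 * real r - 1) * (2 * real j + 1)"
      using mult_nonneg_nonneg[of "real j" "real r"] by (simp add: algebra_simps)
    then have "(2 * real r - 2 * real j - 1) / (2 * real j + 1) \<le> 2 * real r - 1"
      by (simp add: pos_divide_le_eq)
    then show "\<rho> \<le> \<sigma>"
      unfolding \<rho>_def \<sigma>_def using j by (intro mult_left_mono) auto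
  qed (use Suc j in \<open>auto simp: \<rho>_def\<close>)
  also have "\<dots> = real (r choose Suc j) * (2 * real r - 1) ^ Suc j"
    using binomial_Suc_real[of j r] j by (simp add: \<sigma>_def)
  finally show ?case .
qed

lemma two_point_moment_le:
  fixes y g :: real
  shows "((y + g) ^ (2 * r) + (y - g) ^ (2 * r)) / 2 \<le> (y\<^sup>2 + (2 * real r - 1) * g\<^sup>2) ^ r"
proof -
  define c where "c k = real (2 * r choose k) * g ^ k * y ^ (2 * r - k)" for k
  have c_even: "c (2 * j) = real (2 * r choose (2 * j)) * (g\<^sup>2) ^ j * (y\<^sup>2) ^ (r - j)" for j
    unfolding c_def power_mult[symmetric] diff_mult_distrib2 by simp
  have "(y + g) ^ (2 * r) + (y - g) ^ (2 * r) = (g + y) ^ (2 * r) + (- g + y) ^ (2 * r)"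
    by (simp add: add.commute)
  also have "\<dots> = (\<Sum>k\<le>2 * r. c k + (- 1) ^ k * c k)"
    unfolding binomial_ring c_def by (simp add: sum.distrib power_minus[of g] algebra_simps)
  also have "\<dots> = (\<Sum>k<2 * Suc r. if even k then 2 * c k else 0)"
    by (auto simp: lessThan_Suc_atMost intro!: sum.cong)
  also have "\<dots> = 2 * (\<Sum>j\<le>r. c (2 * j))"
    unfolding sum_split_even_odd by (simp add: lessThan_Suc_atMost sum_distrib_left)
  finally have "((y + g) ^ (2 * r) + (y - g) ^ (2 * r)) / 2
      = (\<Sum>j\<le>r. real (2 * r choose (2 * j)) * (g\<^sup>2) ^ j * (y\<^sup>2) ^ (r - j))"
    by (simp add: c_even)
  also have "\<dots> \<le> (\<Sum>j\<le>r. real (r choose j) * ((2 * real r - 1) * g\<^sup>2) ^ j * (y\<^sup>2) ^ (r - j))"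
  proof (rule sum_mono)
    fix j assume "j \<in> {..r}"
    then have "real (2 * r choose (2 * j)) * ((g\<^sup>2) ^ j * (y\<^sup>2) ^ (r - j))
        \<le> real (r choose j) * (2 * real r - 1) ^ j * ((g\<^sup>2) ^ j * (y\<^sup>2) ^ (r - j))"
      by (intro mult_right_mono binomial_double_le) auto
    then show "real (2 * r choose (2 * j)) * (g\<^sup>2) ^ j * (y\<^sup>2) ^ (r - j)
        \<le> real (r choose j) * ((2 * real r - 1) * g\<^sup>2) ^ j * (y\<^sup>2) ^ (r - j)"
      by (simp add: power_mult_distrib mult.assoc)
  qed
  also have "\<dots> = (y\<^sup>2 + (2 * real r - 1) * g\<^sup>2) ^ r"
    by (simp only: add.commute[of "y\<^sup>2"] binomial_ring)
  finally show ?thesis .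
qed

section \<open>Expectations along the random walk down a decision tree\<close>

text \<open>A state of the walk is a subtree together with a partial assignment \<open>z\<close>, where
  \<open>z i = 0\<close> means that \<open>x\<^sub>i\<close> is still free.  \<open>walk_step G\<close> is the expectation of \<open>G\<close>
  after the root query: a free variable is set to \<open>-1\<close> or \<open>1\<close> with probability \<open>1/2\<close>,
  a fixed one is followed.\<close>

definition walk_step :: "(dtree \<Rightarrow> (nat \<Rightarrow> real) \<Rightarrow> real) \<Rightarrow> dtree \<Rightarrow> (nat \<Rightarrow> real) \<Rightarrow> real" where
  "walk_step G T z = (case T of
      Leaf b \<Rightarrow> G T z
    | Node i l r \<Rightarrow>
        if z i = 0 then (G l (z(i := -1)) + G r (z(i := 1))) / 2
        else if z i = 1 then G r z else G l z)"

definition walk_exp :: "nat \<Rightarrow> (dtree \<Rightarrow> (nat \<Rightarrow> real) \<Rightarrow> real) \<Rightarrow> dtree \<Rightarrow> (nat \<Rightarrow> real) \<Rightarrow> real" where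
  "walk_exp n = walk_step ^^ n"

lemma walk_exp_0 [simp]: "walk_exp 0 G = G"
  by (simp add: walk_exp_def)

lemma walk_exp_Suc: "walk_exp (Suc n) G = walk_step (walk_exp n G)"
  by (simp add: walk_exp_def)

lemma walk_exp_Suc': "walk_exp (Suc n) G = walk_exp n (walk_step G)"
  unfolding walk_exp_def funpow_Suc_right by simp

lemma walk_exp_Leaf: "walk_exp n G (Leaf b) z = G (Leaf b) z"
  by (induction n) (simp_all add: walk_exp_Suc walk_step_def)

lemma walk_step_mono: "(\<And>U z. G U z \<le> H U z) \<Longrightarrow> walk_step G T z \<le> walk_step H T z"
  by (auto simp: walk_step_def split: dtree.split intro: add_mono divide_right_mono)

lemma walk_step_add: "walk_step (\<lambda>U z. G U z + H U z) = (\<lambda>U z. walk_step G U z + walk_step H U z)"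
  by (simp add: fun_eq_iff walk_step_def add_divide_distrib split: dtree.split)

lemma walk_step_cmult: "walk_step (\<lambda>U z. c * G U z) = (\<lambda>U z. c * walk_step G U z)"
  by (simp add: fun_eq_iff walk_step_def distrib_left split: dtree.split)

lemma walk_step_const: "walk_step (\<lambda>U z. c) = (\<lambda>U z. c)"
  by (simp add: fun_eq_iff walk_step_def split: dtree.split)

lemma walk_step_power_le:
  assumes "\<And>U z. 0 \<le> G U z"
  shows "walk_step G T z ^ k \<le> walk_step (\<lambda>U z. G U z ^ k) T z"
proof (cases T)
  case (Node i l r)
  then show ?thesis
    using midpoint_power_le[OF assms assms, of l "z(i := - 1)" r "z(i := 1)" k]
    by (simp add: walk_step_def)
qed (simp add: walk_step_def)

lemma walk_exp_mono: "(\<And>U z. G U z \<le> H U z) \<Longrightarrow> walk_exp n G T z \<le> walk_exp n H T z"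
  by (induction n arbitrary: T z) (auto simp: walk_exp_Suc intro: walk_step_mono)

lemma walk_exp_add: "walk_exp n (\<lambda>U z. G U z + H U z) = (\<lambda>U z. walk_exp n G U z + walk_exp n H U z)"
  by (induction n) (simp_all add: walk_exp_Suc walk_step_add)

lemma walk_exp_cmult: "walk_exp n (\<lambda>U z. c * G U z) = (\<lambda>U z. c * walk_exp n G U z)"
  by (induction n) (simp_all add: walk_exp_Suc walk_step_cmult)

lemma walk_exp_const: "walk_exp n (\<lambda>U z. c) = (\<lambda>U z. c)"
  by (induction n) (simp_all add: walk_exp_Suc walk_step_const)

lemma walk_exp_sum:
  "finite I \<Longrightarrow> walk_exp n (\<lambda>U z. \<Sum>i\<in>I. G i U z) = (\<lambda>U z. \<Sum>i\<in>I. walk_exp n (G i) U z)"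
  by (induction I rule: finite_induct) (simp_all add: walk_exp_const walk_exp_add)

lemma walk_exp_nonneg: "(\<And>U z. 0 \<le> G U z) \<Longrightarrow> 0 \<le> walk_exp n G T z"
  using walk_exp_mono[of "\<lambda>U z. 0" G] by (simp add: walk_exp_const)

lemma walk_exp_abs_le: "\<bar>walk_exp n G T z\<bar> \<le> walk_exp n (\<lambda>U z. \<bar>G U z\<bar>) T z"
proof -
  have "walk_exp n G T z \<le> walk_exp n (\<lambda>U z. \<bar>G U z\<bar>) T z"
    by (rule walk_exp_mono) simp
  moreover have "walk_exp n (\<lambda>U z. - 1 * G U z) T z \<le> walk_exp n (\<lambda>U z. \<bar>G U z\<bar>) T z"
    by (rule walk_exp_mono) simp
  ultimately show ?thesis
    unfolding walk_exp_cmult by simp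
qed

lemma walk_exp_power_le:
  assumes "\<And>U z. 0 \<le> G U z"
  shows "walk_exp n G T z ^ k \<le> walk_exp n (\<lambda>U z. G U z ^ k) T z"
proof (induction n arbitrary: T z)
  case (Suc n)
  have "walk_exp (Suc n) G T z ^ k \<le> walk_step (\<lambda>U z. walk_exp n G U z ^ k) T z"
    unfolding walk_exp_Suc by (intro walk_step_power_le walk_exp_nonneg assms)
  also have "\<dots> \<le> walk_exp (Suc n) (\<lambda>U z. G U z ^ k) T z"
    unfolding walk_exp_Suc by (intro walk_step_mono Suc.IH)
  finally show ?case .
qed simp

lemma walk_exp_minkowski:
  assumes "1 \<le> p" "0 < \<alpha>" "0 < \<gamma>" "\<And>U z. 0 \<le> A U z" "\<And>U z. 0 \<le> B U z"
    and "walk_exp n (\<lambda>U z. A U z ^ p) T z \<le> \<alpha> ^ p"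
    and "walk_exp n (\<lambda>U z. B U z ^ p) T z \<le> \<gamma> ^ p"
  shows "walk_exp n (\<lambda>U z. (A U z + B U z) ^ p) T z \<le> (\<alpha> + \<gamma>) ^ p"
proof -
  obtain k where p: "p = Suc k"
    using assms(1) by (cases p) auto
  have "walk_exp n (\<lambda>U z. (A U z + B U z) ^ p) T z
      \<le> walk_exp n (\<lambda>U z. (\<alpha> + \<gamma>) ^ k / \<alpha> ^ k * A U z ^ p + (\<alpha> + \<gamma>) ^ k / \<gamma> ^ k * B U z ^ p) T z"
    unfolding p using assms(2-5) by (intro walk_exp_mono power_add_le_weighted)
  also have "\<dots> = (\<alpha> + \<gamma>) ^ k / \<alpha> ^ k * walk_exp n (\<lambda>U z. A U z ^ p) T z
      + (\<alpha> + \<gamma>) ^ k / \<gamma> ^ k * walk_exp n (\<lambda>U z. B U z ^ p) T z"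
    by (simp only: walk_exp_add walk_exp_cmult)
  also have "\<dots> \<le> (\<alpha> + \<gamma>) ^ k / \<alpha> ^ k * \<alpha> ^ p + (\<alpha> + \<gamma>) ^ k / \<gamma> ^ k * \<gamma> ^ p"
    using assms(2,3,6,7) by (intro add_mono mult_left_mono) auto
  also have "\<dots> = (\<alpha> + \<gamma>) ^ p"
    using assms(2,3) by (simp add: p field_simps)
  finally show ?thesis .
qed

section \<open>Multilinear polynomials and averages over subcubes\<close>

definition ml_eval :: "nat \<Rightarrow> (nat set \<Rightarrow> real) \<Rightarrow> (nat \<Rightarrow> real) \<Rightarrow> real" where
  "ml_eval m a z = (\<Sum>S\<in>Pow {0..<m}. a S * (\<Prod>j\<in>S. z j))"

definition ml_deriv :: "nat \<Rightarrow> (nat set \<Rightarrow> real) \<Rightarrow> nat set \<Rightarrow> real" where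
  "ml_deriv i a S = (if i \<in> S then 0 else a (insert i S))"

definition ml_homogeneous :: "nat \<Rightarrow> nat \<Rightarrow> (nat set \<Rightarrow> real) \<Rightarrow> bool" where
  "ml_homogeneous m k a \<longleftrightarrow> (\<forall>S\<subseteq>{0..<m}. a S \<noteq> 0 \<longrightarrow> card S = k)"

lemma ml_eval_split:
  assumes "i < m"
  shows "ml_eval m a z = (\<Sum>S\<in>Pow ({0..<m} - {i}). a S * (\<Prod>j\<in>S. z j))
    + z i * (\<Sum>S\<in>Pow ({0..<m} - {i}). a (insert i S) * (\<Prod>j\<in>S. z j))"
proof -
  define B where "B = {0..<m} - {i}"
  have B: "{0..<m} = insert i B" "i \<notin> B" "finite B"
    using assms by (auto simp: B_def)
  have "ml_eval m a z = (\<Sum>S\<in>Pow B. a S * (\<Prod>j\<in>S. z j)) + (\<Sum>S\<in>insert i ` Pow B. a S * (\<Prod>j\<in>S. z j))"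
    unfolding ml_eval_def B(1) Pow_insert by (rule sum.union_disjoint) (use B in auto)
  also have "(\<Sum>S\<in>insert i ` Pow B. a S * (\<Prod>j\<in>S. z j)) = (\<Sum>S\<in>Pow B. a (insert i S) * (\<Prod>j\<in>insert i S. z j))"
    by (subst sum.reindex) (use B in \<open>auto intro!: inj_onI\<close>)
  also have "\<dots> = z i * (\<Sum>S\<in>Pow B. a (insert i S) * (\<Prod>j\<in>S. z j))"
    unfolding sum_distrib_left
  proof (intro sum.cong refl)
    fix S assume "S \<in> Pow B"
    then have "finite S" "i \<notin> S"
      using B finite_subset by auto
    then show "a (insert i S) * prod z (insert i S) = z i * (a (insert i S) * prod z S)"
      by simp
  qed
  finally show ?thesis
    by (simp add: B_def)
qed

lemma ml_eval_deriv:
  assumes "i < m"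
  shows "ml_eval m (ml_deriv i a) z = (\<Sum>S\<in>Pow ({0..<m} - {i}). a (insert i S) * (\<Prod>j\<in>S. z j))"
  unfolding ml_eval_split[OF assms] by (auto simp: ml_deriv_def intro!: sum.cong)

lemma ml_eval_upd:
  assumes "i < m" "z i = 0"
  shows "ml_eval m a (z(i := c)) = ml_eval m a z + c * ml_eval m (ml_deriv i a) z"
proof -
  have upd: "prod (z(i := c)) S = prod z S" if "S \<in> Pow ({0..<m} - {i})" for S
    using that by (intro prod.cong) auto
  have "ml_eval m a (z(i := c)) = (\<Sum>S\<in>Pow ({0..<m} - {i}). a S * prod z S)
      + c * (\<Sum>S\<in>Pow ({0..<m} - {i}). a (insert i S) * prod z S)"
    unfolding ml_eval_split[OF assms(1), of a "z(i := c)"]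
    by (simp only: upd fun_upd_same cong: sum.cong)
  then show ?thesis
    unfolding ml_eval_split[OF assms(1), of a z] ml_eval_deriv[OF assms(1)]
    using assms(2) by simp
qed

lemma ml_eval_upd_outside: "m \<le> i \<Longrightarrow> ml_eval m a (z(i := c)) = ml_eval m a z"
  unfolding ml_eval_def by (intro sum.cong refl arg_cong2[where f = "(*)"] prod.cong) auto

lemma ml_eval_eq_empty_coeff:
  assumes "\<And>S. S \<subseteq> {0..<m} \<Longrightarrow> S \<noteq> {} \<Longrightarrow> a S * (\<Prod>j\<in>S. z j) = 0"
  shows "ml_eval m a z = a {}"
proof -
  have "ml_eval m a z = a {} * (\<Prod>j\<in>{}. z j) + (\<Sum>S\<in>Pow {0..<m} - {{}}. a S * (\<Prod>j\<in>S. z j))"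
    unfolding ml_eval_def by (rule sum.remove) auto
  also have "(\<Sum>S\<in>Pow {0..<m} - {{}}. a S * (\<Prod>j\<in>S. z j)) = 0"
    using assms by (intro sum.neutral) auto
  finally show ?thesis
    by simp
qed

lemma ml_eval_zero: "ml_eval m a (\<lambda>_. 0) = a {}"
proof (rule ml_eval_eq_empty_coeff)
  fix S :: "nat set" assume "S \<subseteq> {0..<m}" "S \<noteq> {}"
  then show "a S * (\<Prod>j\<in>S. 0) = 0"
    using finite_subset[OF _ finite_atLeastLessThan] by auto
qed

lemma ml_homogeneous_empty: "ml_homogeneous m k a \<Longrightarrow> 0 < k \<Longrightarrow> a {} = 0"
  unfolding ml_homogeneous_def by auto

lemma ml_eval_homogeneous_0:
  assumes "ml_homogeneous m 0 a"
  shows "ml_eval m a z = a {}"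
proof (rule ml_eval_eq_empty_coeff)
  fix S assume "S \<subseteq> {0..<m}" "S \<noteq> {}"
  moreover from this have "card S \<noteq> 0"
    by (auto dest: finite_subset[OF _ finite_atLeastLessThan])
  ultimately show "a S * prod z S = 0"
    using assms unfolding ml_homogeneous_def by auto
qed

lemma ml_homogeneous_deriv:
  assumes "i < m" "ml_homogeneous m k a"
  shows "ml_homogeneous m (k - 1) (ml_deriv i a)"
  unfolding ml_homogeneous_def
proof (intro allI impI)
  fix S assume S: "S \<subseteq> {0..<m}" "ml_deriv i a S \<noteq> 0"
  then have i: "i \<notin> S" "a (insert i S) \<noteq> 0"
    by (auto simp: ml_deriv_def split: if_splits)
  moreover have "insert i S \<subseteq> {0..<m}"
    using assms(1) S(1) by simp
  ultimately have "card (insert i S) = k"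
    using assms(2) unfolding ml_homogeneous_def by blast
  then show "card S = k - 1"
    using i(1) S(1) finite_subset[OF _ finite_atLeastLessThan] by simp
qed

definition overlay :: "(nat \<Rightarrow> real) \<Rightarrow> (nat \<Rightarrow> real) \<Rightarrow> nat \<Rightarrow> real" where
  "overlay z x j = (if z j = 0 then x j else z j)"

lemma overlay_zero [simp]: "overlay (\<lambda>_. 0) x = x"
  by (simp add: overlay_def fun_eq_iff)

lemma overlay_upd: "z i = 0 \<Longrightarrow> c \<noteq> 0 \<Longrightarrow> overlay z (x(i := c)) = overlay (z(i := c)) x"
  by (auto simp: overlay_def fun_eq_iff)

lemma overlay_fixed: "z j \<noteq> 0 \<Longrightarrow> overlay z x j = z j"
  by (simp add: overlay_def)

lemma card_cube: "card (cube m) = 2 ^ m"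
  unfolding cube_def by (simp add: card_PiE) (simp add: numeral_2_eq_2)

lemma cube_sum_flip:
  fixes F :: "(nat \<Rightarrow> real) \<Rightarrow> real"
  assumes "i < m"
  shows "(\<Sum>x\<in>cube m. F x) = (\<Sum>x\<in>cube m. (F (x(i := 1)) + F (x(i := - 1))) / 2)"
proof -
  define flip where "flip x = x(i := - x i)" for x :: "nat \<Rightarrow> real"
  have flip_cube: "flip x \<in> cube m" if "x \<in> cube m" for x
    using that assms unfolding cube_def flip_def by (auto simp: PiE_iff extensional_def)
  have flip_flip: "flip (flip x) = x" for x
    by (simp add: flip_def)
  have "(\<Sum>x\<in>cube m. F x) = (\<Sum>x\<in>cube m. F (flip x))"
    by (rule sum.reindex_bij_witness[of _ flip flip]) (auto simp: flip_flip flip_cube)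
  then have "2 * (\<Sum>x\<in>cube m. F x) = (\<Sum>x\<in>cube m. F x + F (flip x))"
    by (simp add: sum.distrib)
  also have "\<dots> = (\<Sum>x\<in>cube m. F (x(i := 1)) + F (x(i := - 1)))"
  proof (rule sum.cong)
    fix x assume "x \<in> cube m"
    then have "x i = 1 \<or> x i = - 1"
      using assms unfolding cube_def by auto
    then show "F x + F (flip x) = F (x(i := 1)) + F (x(i := - 1))"
      by (auto simp: flip_def fun_upd_idem)
  qed simp
  finally show ?thesis
    by (simp add: sum_divide_distrib[symmetric])
qed

lemma cube_sum_prod_overlay:
  assumes "S \<subseteq> {0..<m}"
  shows "(\<Sum>x\<in>cube m. \<Prod>j\<in>S. overlay z x j) = 2 ^ m * (\<Prod>j\<in>S. z j)"
proof (cases "\<exists>j\<in>S. z j = 0")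
  case True
  then obtain j where j: "j \<in> S" "z j = 0"
    by blast
  have S: "finite S" "j < m"
    using assms j(1) finite_subset by auto
  have "(\<Prod>k\<in>S. overlay z (x(j := c)) k) = c * (\<Prod>k\<in>S - {j}. overlay z x k)" for x c
  proof -
    have "(\<Prod>k\<in>S - {j}. overlay z (x(j := c)) k) = (\<Prod>k\<in>S - {j}. overlay z x k)"
      by (intro prod.cong) (auto simp: overlay_def)
    then show ?thesis
      using prod.remove[OF S(1) j(1), of "overlay z (x(j := c))"] j(2) by (simp add: overlay_def)
  qed
  then have "(\<Sum>x\<in>cube m. \<Prod>k\<in>S. overlay z x k) = 0"
    by (subst cube_sum_flip[OF S(2)]) simp
  moreover have "(\<Prod>k\<in>S. z k) = 0"
    using S j by auto
  ultimately show ?thesis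
    by simp
next
  case False
  then have "(\<Prod>j\<in>S. overlay z x j) = (\<Prod>j\<in>S. z j)" for x
    by (intro prod.cong) (auto simp: overlay_def)
  then show ?thesis
    by (simp add: card_cube)
qed

lemma cube_sum_ml_eval_overlay: "(\<Sum>x\<in>cube m. ml_eval m a (overlay z x)) = 2 ^ m * ml_eval m a z"
proof -
  have "(\<Sum>x\<in>cube m. ml_eval m a (overlay z x)) = (\<Sum>S\<in>Pow {0..<m}. a S * (\<Sum>x\<in>cube m. \<Prod>j\<in>S. overlay z x j))"
    unfolding ml_eval_def sum_distrib_left by (rule sum.swap)
  also have "\<dots> = (\<Sum>S\<in>Pow {0..<m}. 2 ^ m * (a S * prod z S))"
    by (intro sum.cong) (simp_all add: cube_sum_prod_overlay)
  also have "\<dots> = 2 ^ m * ml_eval m a z"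
    by (simp add: ml_eval_def sum_distrib_left)
  finally show ?thesis .
qed

section \<open>The level-\<open>l\<close> weight as an expectation along the walk\<close>

text \<open>The value \<open>0\<close> at inner nodes is never seen by a walk of at least \<open>dt_depth T\<close> steps.\<close>

fun leaf_val :: "dtree \<Rightarrow> real" where
  "leaf_val (Leaf b) = (if b then 1 else -1)"
| "leaf_val (Node i l r) = 0"

definition tree_corr :: "nat \<Rightarrow> ((nat \<Rightarrow> real) \<Rightarrow> real) \<Rightarrow> dtree \<Rightarrow> (nat \<Rightarrow> real) \<Rightarrow> real" where
  "tree_corr m \<Phi> T z = (\<Sum>x\<in>cube m. dt_eval T (overlay z x) * \<Phi> (overlay z x)) / 2 ^ m"

lemma tree_corr_Node:
  assumes "i < m"
  shows "tree_corr m \<Phi> (Node i l r) z = walk_step (tree_corr m \<Phi>) (Node i l r) z"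
proof -
  consider "z i = 0" | "z i = 1" | "z i \<noteq> 0" "z i \<noteq> 1"
    by blast
  then show ?thesis
  proof cases
    case 1
    have "(\<Sum>x\<in>cube m. dt_eval (Node i l r) (overlay z x) * \<Phi> (overlay z x))
        = (\<Sum>x\<in>cube m. (dt_eval r (overlay (z(i := 1)) x) * \<Phi> (overlay (z(i := 1)) x)
            + dt_eval l (overlay (z(i := - 1)) x) * \<Phi> (overlay (z(i := - 1)) x)) / 2)"
      using 1 by (subst cube_sum_flip[OF assms]) (simp add: overlay_upd overlay_fixed)
    then show ?thesis
      using 1 by (simp add: tree_corr_def walk_step_def sum.distrib add_divide_distrib sum_divide_distrib[symmetric])
  qed (simp_all add: tree_corr_def walk_step_def overlay_fixed)
qed

lemma tree_corr_Leaf: "tree_corr m (ml_eval m a) (Leaf b) z = leaf_val (Leaf b) * ml_eval m a z"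
  by (simp add: tree_corr_def sum_distrib_left[symmetric] cube_sum_ml_eval_overlay)

lemma tree_corr_ml_eval_eq_walk_exp:
  assumes "dt_vars_below m T" "dt_depth T \<le> n"
  shows "tree_corr m (ml_eval m a) T z = walk_exp n (\<lambda>U z. leaf_val U * ml_eval m a z) T z"
  using assms
proof (induction T arbitrary: n z)
  case (Leaf b)
  then show ?case
    by (simp add: walk_exp_Leaf tree_corr_Leaf)
next
  case (Node i l r)
  then obtain n' where n: "n = Suc n'"
    by (cases n) auto
  have "tree_corr m (ml_eval m a) (Node i l r) z = walk_step (tree_corr m (ml_eval m a)) (Node i l r) z"
    using Node.prems by (simp add: tree_corr_Node)
  also have "\<dots> = walk_step (walk_exp n' (\<lambda>U z. leaf_val U * ml_eval m a z)) (Node i l r) z"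
  proof -
    have "dt_vars_below m l" "dt_vars_below m r" "dt_depth l \<le> n'" "dt_depth r \<le> n'"
      using Node.prems n by auto
    then have "tree_corr m (ml_eval m a) l = walk_exp n' (\<lambda>U z. leaf_val U * ml_eval m a z) l"
      "tree_corr m (ml_eval m a) r = walk_exp n' (\<lambda>U z. leaf_val U * ml_eval m a z) r"
      using Node.IH by (simp_all add: fun_eq_iff)
    then show ?thesis
      by (simp add: walk_step_def)
  qed
  also have "\<dots> = walk_exp n (\<lambda>U z. leaf_val U * ml_eval m a z) (Node i l r) z"
    by (simp add: n walk_exp_Suc)
  finally show ?case .
qed

definition level_signs :: "nat \<Rightarrow> ((nat \<Rightarrow> real) \<Rightarrow> real) \<Rightarrow> nat \<Rightarrow> nat set \<Rightarrow> real" where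
  "level_signs m f l S = (if card S = l then sgn (fourier_coeff m f S) else 0)"

lemma level_signs_homogeneous: "ml_homogeneous m l (level_signs m f l)"
  by (simp add: ml_homogeneous_def level_signs_def)

lemma level_signs_bounded: "\<forall>S. \<bar>level_signs m f l S\<bar> \<le> 1"
  by (simp add: level_signs_def abs_sgn_eq)

lemma L1_level_eq_cube_sum:
  "L1_level m f l = (\<Sum>x\<in>cube m. f x * ml_eval m (level_signs m f l) x) / 2 ^ m"
proof -
  have "(\<Sum>x\<in>cube m. f x * ml_eval m (level_signs m f l) x) / 2 ^ m
      = (\<Sum>S\<in>Pow {0..<m}. level_signs m f l S * fourier_coeff m f S)"
    unfolding ml_eval_def fourier_coeff_def
    by (simp add: sum_distrib_left sum_divide_distrib sum.swap[of _ "cube m"] algebra_simps)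
  also have "\<dots> = (\<Sum>S\<in>Pow {0..<m}. if card S = l then \<bar>fourier_coeff m f S\<bar> else 0)"
    by (intro sum.cong) (auto simp: level_signs_def abs_sgn)
  also have "\<dots> = L1_level m f l"
  proof -
    have "{S. S \<subseteq> {0..<m} \<and> card S = l} = {S \<in> Pow {0..<m}. card S = l}"
      by auto
    then show ?thesis
      unfolding L1_level_def by (simp only: sum.inter_filter finite_Pow_iff finite_atLeastLessThan)
  qed
  finally show ?thesis ..
qed

lemma L1_level_dt_eval_eq_walk_exp:
  assumes "dt_vars_below m T"
  shows "L1_level m (dt_eval T) l
    = walk_exp (dt_depth T) (\<lambda>U z. leaf_val U * ml_eval m (level_signs m (dt_eval T) l) z) T (\<lambda>_. 0)"
  using tree_corr_ml_eval_eq_walk_exp[OF assms order.refl, of _ "\<lambda>_. 0"]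
  by (simp add: L1_level_eq_cube_sum tree_corr_def)

lemma L1_level_dt_eval_sq_le:
  assumes "dt_vars_below m T"
  shows "L1_level m (dt_eval T) l ^ 2
    \<le> walk_exp (dt_depth T) (\<lambda>U z. ml_eval m (level_signs m (dt_eval T) l) z ^ 2) T (\<lambda>_. 0)"
proof -
  let ?g = "ml_eval m (level_signs m (dt_eval T) l)" and ?n = "dt_depth T"
  have leaf_val_abs: "\<bar>leaf_val U\<bar> \<le> 1" for U
    by (cases U) auto
  have "L1_level m (dt_eval T) l \<le> walk_exp ?n (\<lambda>U z. \<bar>leaf_val U * ?g z\<bar>) T (\<lambda>_. 0)"
    unfolding L1_level_dt_eval_eq_walk_exp[OF assms] by (rule order_trans[OF abs_ge_self walk_exp_abs_le])
  also have "\<dots> \<le> walk_exp ?n (\<lambda>U z. \<bar>?g z\<bar>) T (\<lambda>_. 0)"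
    using leaf_val_abs by (intro walk_exp_mono) (simp add: abs_mult mult_left_le_one_le)
  finally have "L1_level m (dt_eval T) l ^ 2 \<le> walk_exp ?n (\<lambda>U z. \<bar>?g z\<bar>) T (\<lambda>_. 0) ^ 2"
    by (rule power_mono) (simp add: L1_level_def sum_nonneg)
  also have "\<dots> \<le> walk_exp ?n (\<lambda>U z. \<bar>?g z\<bar> ^ 2) T (\<lambda>_. 0)"
    by (rule walk_exp_power_le) simp
  finally show ?thesis
    by simp
qed

section \<open>Moment bounds for the martingale\<close>

text \<open>By \<open>ml_eval_upd\<close>, one step of the walk from \<open>(T, z)\<close> changes \<open>ml_eval m a z\<close>
  by \<open>\<plusminus>query_deriv m a T z\<close>.\<close>

definition query_deriv :: "nat \<Rightarrow> (nat set \<Rightarrow> real) \<Rightarrow> dtree \<Rightarrow> (nat \<Rightarrow> real) \<Rightarrow> real" where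
  "query_deriv m a T z = (case T of
      Leaf b \<Rightarrow> 0
    | Node i l r \<Rightarrow> if i < m \<and> z i = 0 then ml_eval m (ml_deriv i a) z else 0)"

lemma walk_step_ml_eval_power_le:
  "walk_step (\<lambda>U z. ml_eval m a z ^ (2 * r)) T z
    \<le> (ml_eval m a z ^ 2 + (2 * real r - 1) * query_deriv m a T z ^ 2) ^ r"
proof (cases T)
  case (Node i l r')
  consider "i < m" "z i = 0" | "m \<le> i" "z i = 0" | "z i \<noteq> 0"
    by linarith
  then show ?thesis
  proof cases
    case 1
    let ?y = "ml_eval m a z" and ?g = "ml_eval m (ml_deriv i a) z"
    have "walk_step (\<lambda>U z. ml_eval m a z ^ (2 * r)) T z = ((?y - ?g) ^ (2 * r) + (?y + ?g) ^ (2 * r)) / 2"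
      using 1 by (simp add: Node walk_step_def ml_eval_upd)
    also have "\<dots> \<le> (?y ^ 2 + (2 * real r - 1) * ?g ^ 2) ^ r"
      using two_point_moment_le[of ?y ?g r] by (simp add: add.commute)
    finally show ?thesis
      using 1 by (simp add: Node query_deriv_def)
  qed (simp_all add: Node walk_step_def query_deriv_def ml_eval_upd_outside power_mult)
qed (simp add: walk_step_def query_deriv_def power_mult)

lemma walk_exp_ml_eval_moment_le:
  assumes r: "1 \<le> r" and \<beta>: "0 < \<beta>" "ml_eval m a z ^ 2 \<le> \<beta>"
    and deriv: "\<And>k. k < n \<Longrightarrow> walk_exp k (\<lambda>U z. query_deriv m a U z ^ (2 * r)) T z \<le> \<beta> ^ r"
  shows "walk_exp n (\<lambda>U z. ml_eval m a z ^ (2 * r)) T z \<le> ((1 + real n * (2 * real r - 1)) * \<beta>) ^ r"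
  using deriv
proof (induction n)
  case 0
  show ?case
    using \<beta>(2) by (simp add: power_mult power_mono)
next
  case (Suc n)
  define K where "K = 2 * real r - 1"
  have K: "0 < K"
    using r by (simp add: K_def)
  have "walk_exp (Suc n) (\<lambda>U z. ml_eval m a z ^ (2 * r)) T z
      \<le> walk_exp n (\<lambda>U z. (ml_eval m a z ^ 2 + K * query_deriv m a U z ^ 2) ^ r) T z"
    unfolding walk_exp_Suc' K_def by (intro walk_exp_mono walk_step_ml_eval_power_le)
  also have "\<dots> \<le> ((1 + real n * K) * \<beta> + K * \<beta>) ^ r"
  proof (rule walk_exp_minkowski[OF r])
    show "walk_exp n (\<lambda>U z. (ml_eval m a z ^ 2) ^ r) T z \<le> ((1 + real n * K) * \<beta>) ^ r"
      using Suc by (simp add: K_def power_mult)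
    have "walk_exp n (\<lambda>U z. (K * query_deriv m a U z ^ 2) ^ r) T z
        = K ^ r * walk_exp n (\<lambda>U z. query_deriv m a U z ^ (2 * r)) T z"
      by (simp add: power_mult_distrib power_mult walk_exp_cmult)
    also have "\<dots> \<le> K ^ r * \<beta> ^ r"
      using Suc.prems K by (intro mult_left_mono) auto
    finally show "walk_exp n (\<lambda>U z. (K * query_deriv m a U z ^ 2) ^ r) T z \<le> (K * \<beta>) ^ r"
      by (simp add: power_mult_distrib)
  qed (use K \<beta>(1) in \<open>auto intro!: mult_pos_pos add_pos_nonneg\<close>)
  also have "(1 + real n * K) * \<beta> + K * \<beta> = (1 + real (Suc n) * K) * \<beta>"
    by (simp add: algebra_simps)
  finally show ?case
    by (simp add: K_def)
qed

lemma query_deriv_power_le: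
  assumes "1 \<le> r"
  shows "query_deriv m a T z ^ (2 * r) \<le> (\<Sum>i<m. ml_eval m (ml_deriv i a) z ^ (2 * r))"
proof -
  have nonneg: "0 \<le> ml_eval m (ml_deriv i a) z ^ (2 * r)" for i
    by (simp add: power_mult)
  show ?thesis
  proof (cases "\<exists>i l r'. T = Node i l r' \<and> i < m \<and> z i = 0")
    case True
    then obtain i l r' where "T = Node i l r'" "i < m" "z i = 0"
      by blast
    then have "query_deriv m a T z = ml_eval m (ml_deriv i a) z"
      by (simp add: query_deriv_def)
    also have "\<dots> ^ (2 * r) \<le> (\<Sum>i<m. ml_eval m (ml_deriv i a) z ^ (2 * r))"
      using \<open>i < m\<close> nonneg by (intro member_le_sum) auto
    finally show ?thesis .
  next
    case False
    then have "query_deriv m a T z = 0"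
      by (auto simp: query_deriv_def split: dtree.split)
    then show ?thesis
      using assms nonneg by (simp add: sum_nonneg zero_power)
  qed
qed

lemma walk_exp_query_deriv_le:
  assumes "1 \<le> r" "real m \<le> c ^ r" "0 \<le> B"
    and deriv: "\<And>i. i < m \<Longrightarrow> walk_exp k (\<lambda>U z. ml_eval m (ml_deriv i a) z ^ (2 * r)) T z \<le> B ^ r"
  shows "walk_exp k (\<lambda>U z. query_deriv m a U z ^ (2 * r)) T z \<le> (c * B) ^ r"
proof -
  have "walk_exp k (\<lambda>U z. query_deriv m a U z ^ (2 * r)) T z
      \<le> walk_exp k (\<lambda>U z. \<Sum>i<m. ml_eval m (ml_deriv i a) z ^ (2 * r)) T z"
    by (intro walk_exp_mono query_deriv_power_le assms(1))
  also have "\<dots> = (\<Sum>i<m. walk_exp k (\<lambda>U z. ml_eval m (ml_deriv i a) z ^ (2 * r)) T z)"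
    by (simp add: walk_exp_sum)
  also have "\<dots> \<le> real m * B ^ r"
    using sum_mono[of "{..<m}" _ "\<lambda>_. B ^ r"] deriv by simp
  also have "\<dots> \<le> (c * B) ^ r"
    using assms(2,3) by (simp add: power_mult_distrib mult_right_mono)
  finally show ?thesis .
qed

lemma walk_exp_ml_eval_homogeneous_0:
  assumes "ml_homogeneous m 0 a" "\<forall>S. \<bar>a S\<bar> \<le> 1"
  shows "walk_exp n (\<lambda>U z. ml_eval m a z ^ (2 * r)) T z \<le> 1"
proof -
  have "\<bar>a {}\<bar> ^ (2 * r) \<le> 1"
    using assms(2) by (simp add: power_le_one)
  then have "walk_exp n (\<lambda>U z. ml_eval m a z ^ (2 * r)) T z \<le> walk_exp n (\<lambda>U z. 1) T z"
    by (intro walk_exp_mono) (simp add: ml_eval_homogeneous_0[OF assms(1)] power_even_abs)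
  then show ?thesis
    by (simp add: walk_exp_const)
qed

text \<open>Induction on the degree: the derivatives of a polynomial of degree \<open>k + 1\<close> have
  degree \<open>k\<close>, and \<open>m \<le> c ^ r\<close> pays for summing over the \<open>m\<close> possible queries.\<close>

lemma walk_exp_ml_eval_moment_homogeneous:
  assumes r: "1 \<le> r" and c: "0 < c" "real m \<le> c ^ r"
  shows "ml_homogeneous m k a \<Longrightarrow> \<forall>S. \<bar>a S\<bar> \<le> 1 \<Longrightarrow> n \<le> d \<Longrightarrow>
    walk_exp n (\<lambda>U z. ml_eval m a z ^ (2 * r)) T (\<lambda>_. 0) \<le> ((2 * c * real r * (real d + 1)) ^ k) ^ r"
proof (induction k arbitrary: a n)
  case 0
  then show ?case
    using walk_exp_ml_eval_homogeneous_0 by simp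
next
  case (Suc k)
  define B where "B = (2 * c * real r * (real d + 1)) ^ k"
  have B: "0 < B"
    using r c by (simp add: B_def)
  have "walk_exp n (\<lambda>U z. ml_eval m a z ^ (2 * r)) T (\<lambda>_. 0) \<le> ((1 + real n * (2 * real r - 1)) * (c * B)) ^ r"
  proof (rule walk_exp_ml_eval_moment_le[OF r])
    show "0 < c * B"
      using B c by simp
    show "ml_eval m a (\<lambda>_. 0) ^ 2 \<le> c * B"
      using B c ml_homogeneous_empty[OF Suc.prems(1)] by (simp add: ml_eval_zero)
    fix j assume "j < n"
    show "walk_exp j (\<lambda>U z. query_deriv m a U z ^ (2 * r)) T (\<lambda>_. 0) \<le> (c * B) ^ r"
    proof (rule walk_exp_query_deriv_le[OF r c(2)])
      fix i assume "i < m"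
      have "ml_homogeneous m k (ml_deriv i a)"
        using ml_homogeneous_deriv[OF \<open>i < m\<close> Suc.prems(1)] by simp
      moreover have "\<forall>S. \<bar>ml_deriv i a S\<bar> \<le> 1"
        using Suc.prems(2) by (simp add: ml_deriv_def)
      ultimately show "walk_exp j (\<lambda>U z. ml_eval m (ml_deriv i a) z ^ (2 * r)) T (\<lambda>_. 0) \<le> B ^ r"
        unfolding B_def using \<open>j < n\<close> Suc.prems(3) by (intro Suc.IH) auto
    qed (use B in simp)
  qed
  also have "\<dots> \<le> ((2 * c * real r * (real d + 1)) ^ Suc k) ^ r"
  proof (rule power_mono)
    have "1 + real n * (2 * real r - 1) \<le> 2 * real r * (real d + 1)"
      using Suc.prems(3) r mult_right_mono[of "real n" "real d" "2 * real r - 1"] by (simp add: algebra_simps)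
    then have "(1 + real n * (2 * real r - 1)) * (c * B) \<le> 2 * real r * (real d + 1) * (c * B)"
      using B c by (intro mult_right_mono) auto
    then show "(1 + real n * (2 * real r - 1)) * (c * B) \<le> (2 * c * real r * (real d + 1)) ^ Suc k"
      by (simp add: B_def mult_ac)
    show "0 \<le> (1 + real n * (2 * real r - 1)) * (c * B)"
      using B c r by simp
  qed
  finally show ?case .
qed

lemma walk_exp_ml_eval_sq_homogeneous:
  assumes r: "1 \<le> r" and c: "0 < c" "real m \<le> c ^ r"
    and a: "ml_homogeneous m l a" "1 \<le> l" "\<forall>S. \<bar>a S\<bar> \<le> 1"
  shows "walk_exp n (\<lambda>U z. ml_eval m a z ^ 2) T (\<lambda>_. 0)
    \<le> (1 + real n) * (c * (2 * c * real r * (real n + 1)) ^ (l - 1))"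
proof -
  define B where "B = (2 * c * real r * (real n + 1)) ^ (l - 1)"
  have B: "0 < B"
    using r c by (simp add: B_def)
  have "walk_exp j (\<lambda>U z. query_deriv m a U z ^ 2) T (\<lambda>_. 0) \<le> c * B" if "j < n" for j
  proof -
    have "walk_exp j (\<lambda>U z. query_deriv m a U z ^ 2) T (\<lambda>_. 0) ^ r
        \<le> walk_exp j (\<lambda>U z. query_deriv m a U z ^ (2 * r)) T (\<lambda>_. 0)"
      by (simp add: walk_exp_power_le power_mult)
    also have "\<dots> \<le> (c * B) ^ r"
    proof (rule walk_exp_query_deriv_le[OF r c(2)])
      fix i assume "i < m"
      have "ml_homogeneous m (l - 1) (ml_deriv i a)"
        using ml_homogeneous_deriv[OF \<open>i < m\<close> a(1)] .
      moreover have "\<forall>S. \<bar>ml_deriv i a S\<bar> \<le> 1"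
        using a(3) by (simp add: ml_deriv_def)
      ultimately show "walk_exp j (\<lambda>U z. ml_eval m (ml_deriv i a) z ^ (2 * r)) T (\<lambda>_. 0) \<le> B ^ r"
        unfolding B_def using that by (intro walk_exp_ml_eval_moment_homogeneous[OF r c]) auto
    qed (use B in simp)
    finally have "walk_exp j (\<lambda>U z. query_deriv m a U z ^ 2) T (\<lambda>_. 0) ^ r \<le> (c * B) ^ r" .
    moreover have "0 \<le> walk_exp j (\<lambda>U z. query_deriv m a U z ^ 2) T (\<lambda>_. 0)"
      by (rule walk_exp_nonneg) simp
    ultimately show ?thesis
      using r B c by simp
  qed
  then have "walk_exp n (\<lambda>U z. ml_eval m a z ^ (2 * 1)) T (\<lambda>_. 0) \<le> ((1 + real n * (2 * real 1 - 1)) * (c * B)) ^ 1"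
    using B c ml_homogeneous_empty[OF a(1)] a(2)
    by (intro walk_exp_ml_eval_moment_le) (simp_all add: ml_eval_zero)
  then show ?thesis
    by (simp add: B_def)
qed

lemma L1_level_dt_eval_0_le:
  assumes "dt_vars_below m T"
  shows "L1_level m (dt_eval T) 0 \<le> 1"
proof -
  have "walk_exp (dt_depth T) (\<lambda>U z. ml_eval m (level_signs m (dt_eval T) 0) z ^ 2) T (\<lambda>_. 0) \<le> 1"
    using walk_exp_ml_eval_homogeneous_0[OF level_signs_homogeneous level_signs_bounded, where r = 1]
    by simp
  then have "L1_level m (dt_eval T) 0 ^ 2 \<le> 1"
    using L1_level_dt_eval_sq_le[OF assms, of 0] by simp
  then show ?thesis
    by (simp add: abs_square_le_1)
qed

lemma L1_level_dt_eval_sq_le_moment: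
  assumes "dt_vars_below m T" "1 \<le> l" "1 \<le> r" "0 < c" "real m \<le> c ^ r"
  shows "L1_level m (dt_eval T) l ^ 2
    \<le> (1 + real (dt_depth T)) * (c * (2 * c * real r * (real (dt_depth T) + 1)) ^ (l - 1))"
  using L1_level_dt_eval_sq_le[OF assms(1)]
    walk_exp_ml_eval_sq_homogeneous[OF assms(3-5) level_signs_homogeneous assms(2) level_signs_bounded]
  by (rule order_trans)

lemma L1_level_eq_0:
  assumes "m < l"
  shows "L1_level m f l = 0"
proof -
  have "\<not> (S \<subseteq> {0..<m} \<and> card S = l)" for S
    using assms card_mono[OF finite_atLeastLessThan, of S 0 m] by auto
  then have "{S. S \<subseteq> {0..<m} \<and> card S = l} = {}"
    by blast
  then show ?thesis
    unfolding L1_level_def by (simp only: sum.empty)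
qed

lemma ln_moment_order:
  fixes m :: nat
  defines "r \<equiv> nat \<lceil>ln (real m)\<rceil> + 1"
  shows "real m \<le> 3 ^ r" and "2 \<le> m \<Longrightarrow> real r \<le> 5 * ln (real m)"
proof -
  show "real m \<le> 3 ^ r"
  proof (cases "m = 0")
    case False
    then have "real m = exp (ln (real m))"
      by simp
    also have "\<dots> \<le> exp (real r)"
      unfolding r_def by simp linarith
    also have "\<dots> = exp 1 ^ r"
      using exp_of_nat_mult[of r 1] by simp
    also have "\<dots> \<le> 3 ^ r"
      using exp_le by (intro power_mono) auto
    finally show ?thesis .
  qed simp
  assume "2 \<le> m"
  then have "exp (1 / 2) \<le> real m"
    using exp_half_le2 by linarith
  then have "1 / 2 \<le> ln (real m)"
    using \<open>2 \<le> m\<close> ln_ge_iff[of "real m" "1 / 2"] by simp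
  then show "real r \<le> 5 * ln (real m)"
    unfolding r_def by linarith
qed

lemma L1_level_dt_eval_sq_le_log:
  assumes "dt_vars_below m T" "1 \<le> l" "l \<le> m" "l \<le> dt_depth T"
  shows "L1_level m (dt_eval T) l ^ 2 \<le> (8 * real (dt_depth T)) ^ l * (8 * ln (real m)) ^ (l - 1)"
proof -
  define d where "d = real (dt_depth T)"
  define r where "r = nat \<lceil>ln (real m)\<rceil> + 1"
  have d: "1 \<le> d"
    using assms(2,4) by (simp add: d_def)
  have pow: "(6 * real r * (d + 1)) ^ (l - 1) \<le> (8 * d * (8 * ln (real m))) ^ (l - 1)"
  proof (cases "l = 1")
    case False
    then have "real r \<le> 5 * ln (real m)"
      using assms(2,3) ln_moment_order(2) unfolding r_def by simp
    moreover have "0 \<le> ln (real m)"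
      using assms(2,3) by simp
    ultimately have "6 * real r * (d + 1) \<le> 6 * (5 * ln (real m)) * (2 * d)"
      using d by (intro mult_mono) auto
    also have "\<dots> \<le> 8 * d * (8 * ln (real m))"
      using d \<open>0 \<le> ln (real m)\<close> by (simp add: algebra_simps)
    finally show ?thesis
      using d by (intro power_mono) auto
  qed simp
  have "L1_level m (dt_eval T) l ^ 2 \<le> (1 + d) * (3 * (2 * 3 * real r * (d + 1)) ^ (l - 1))"
    unfolding d_def r_def
    by (rule L1_level_dt_eval_sq_le_moment[OF assms(1,2) _ _ ln_moment_order(1)]) simp_all
  also have "\<dots> = (1 + d) * 3 * (6 * real r * (d + 1)) ^ (l - 1)"
    by simp
  also have "\<dots> \<le> (8 * d) * (8 * d * (8 * ln (real m))) ^ (l - 1)"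
    using pow d by (intro mult_mono[of "(1 + d) * 3" "8 * d"]) auto
  also have "\<dots> = (8 * d) ^ l * (8 * ln (real m)) ^ (l - 1)"
  proof -
    obtain k where "l = Suc k"
      using assms(2) by (cases l) auto
    then show ?thesis
      by (simp only: diff_Suc_1 power_mult_distrib power_Suc mult.assoc)
  qed
  finally show ?thesis
    by (simp add: d_def)
qed

theorem mainTheorem4:
  shows "\<exists>C::real. C > 0 \<and>
    (\<forall>(m::nat) (d::nat) (t::dtree) (l::nat).
       dt_vars_below m t \<and> dt_depth t = d \<and> l \<le> d \<longrightarrow>
       L1_level m (dt_eval t) l
         \<le> sqrt ((C * real d) ^ l * (C * ln (real m)) ^ (l - 1)))"
proof (intro exI[of _ 8] conjI allI impI)
  fix m d t l
  assume "dt_vars_below m t \<and> dt_depth t = d \<and> l \<le> d"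
  then have t: "dt_vars_below m t" and d: "dt_depth t = d" "l \<le> d"
    by auto
  consider "l = 0" | "m < l" | "1 \<le> l" "l \<le> m"
    by linarith
  then show "L1_level m (dt_eval t) l \<le> sqrt ((8 * real d) ^ l * (8 * ln (real m)) ^ (l - 1))"
  proof cases
    case 1
    then show ?thesis
      using L1_level_dt_eval_0_le[OF t] by simp
  next
    case 2
    have "0 \<le> ln (real m)"
      by (cases "m = 0") auto
    then show ?thesis
      using L1_level_eq_0[OF 2] by simp
  next
    case 3
    then show ?thesis
      using L1_level_dt_eval_sq_le_log[OF t 3] d by (simp add: real_le_rsqrt)
  qed
qed simp

end
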